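(* Let $b\ge 2$ be an integer. Every natural number that is antipalindromic in base $b$ and whose base-$b$ expansion has an even number of digits is divisible by $b-1$.
   Context: For an integer $b\ge 2$, every natural number $m$ has a unique base-$b$ expansion $m=a_nb^n+\dots+a_1b+a_0$ with $a_0,\dots,a_n\in\{0,1,\dots,b-1\}$ and $a_n\neq 0$ (it has $n+1$ digits). The number $m$ is antipalindromic in base $b$ if $a_j=b-1-a_{n-j}$ for all $j\in\{0,1,\dots,n\}$. *)

theory Defs
  imports Main
begin

definition digit :: "nat \<Rightarrow> nat \<Rightarrow> nat \<Rightarrow> nat" where
  "digit b m j = (m div b ^ j) mod b"

text \<open>Number of base-b digits of m > 0: the least k with m < b^k
  (so that b^(k-1) \<le> m < b^k and the leading digit a_(k-1) is nonzero).\<close>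
definition num_digits :: "nat \<Rightarrow> nat \<Rightarrow> nat" where
  "num_digits b m = (LEAST k. m < b ^ k)"

definition antipalindromic :: "nat \<Rightarrow> nat \<Rightarrow> bool" where
  "antipalindromic b m \<longleftrightarrow> 0 < m \<and>
     (let n = num_digits b m - 1 in
      \<forall>j\<le>n. digit b m j = b - 1 - digit b m (n - j))"

end

theory Submission
  imports Defs "HOL-Number_Theory.Cong"
begin

text \<open>Since \<open>b \<equiv> 1 (mod b - 1)\<close>, every number is congruent to its base-\<open>b\<close> digit sum
  modulo \<open>b - 1\<close>. In an antipalindromic number with \<open>K\<close> digits the digits \<open>a_j\<close> and
  \<open>a_(K-1-j)\<close> add up to \<open>b - 1\<close>, so twice the digit sum is \<open>K (b - 1)\<close>; for even \<open>K\<close>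
  the digit sum is \<open>(K/2) (b - 1)\<close>.\<close>

lemma digit_Suc: "digit b m (Suc j) = digit b (m div b) j"
  by (simp add: digit_def div_mult2_eq)

lemma digit_le: "0 < b \<Longrightarrow> digit b m j \<le> b - 1"
  by (simp add: digit_def less_Suc_eq_le[symmetric])

lemma sum_digit_power_eq:
  "m < b ^ K \<Longrightarrow> (\<Sum>j<K. digit b m j * b ^ j) = m"
proof (induction K arbitrary: m)
  case 0
  then show ?case by simp
next
  case (Suc K)
  have "m div b < b ^ K"
    using Suc.prems by (intro less_mult_imp_div_less) (simp add: mult.commute)
  then have IH: "(\<Sum>j<K. digit b (m div b) j * b ^ j) = m div b"
    by (rule Suc.IH)
  have "(\<Sum>j<Suc K. digit b m j * b ^ j) = digit b m 0 + (\<Sum>j<K. digit b m (Suc j) * b ^ Suc j)"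
    by (simp only: sum.lessThan_Suc_shift) simp
  also have "\<dots> = m mod b + b * (\<Sum>j<K. digit b (m div b) j * b ^ j)"
    by (simp add: digit_Suc sum_distrib_left algebra_simps) (simp add: digit_def)
  also have "\<dots> = m"
    by (simp add: IH)
  finally show ?case .
qed

lemma less_power_num_digits: "2 \<le> b \<Longrightarrow> m < b ^ num_digits b m"
  unfolding num_digits_def
proof (rule LeastI)
  assume "2 \<le> b"
  have "m < 2 ^ m" by (rule less_exp)
  also have "\<dots> \<le> b ^ m" using \<open>2 \<le> b\<close> by (rule power_mono) simp
  finally show "m < b ^ m" .
qed

lemma cong_sum_digits:
  assumes "0 < b" and "m < b ^ K"
  shows "[m = (\<Sum>j<K. digit b m j)] (mod (b - 1))"
proof -
  have base: "[b = 1] (mod (b - 1))"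
    using \<open>0 < b\<close> by (simp add: cong_altdef_nat)
  have "[(\<Sum>j<K. digit b m j * b ^ j) = (\<Sum>j<K. digit b m j * 1 ^ j)] (mod (b - 1))"
    by (intro cong_sum cong_mult cong_refl cong_pow base)
  then show ?thesis
    using sum_digit_power_eq[OF \<open>m < b ^ K\<close>] by simp
qed

lemma antipalindromic_double_digit_sum:
  assumes "0 < b" and "antipalindromic b m"
  shows "2 * (\<Sum>j<num_digits b m. digit b m j) = num_digits b m * (b - 1)"
proof -
  define K where "K = num_digits b m"
  define d where "d = digit b m"
  have anti: "\<forall>i\<le>K - 1. d i = b - 1 - d (K - 1 - i)"
    using assms(2) unfolding antipalindromic_def Let_def K_def d_def by (rule conjunct2)
  have pair: "d j + d (K - Suc j) = b - 1" if "j < K" for j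
  proof -
    have "j \<le> K - 1" using that by simp
    then have "d j = b - 1 - d (K - 1 - j)" by (rule anti[rule_format])
    also have "K - 1 - j = K - Suc j" by simp
    finally have "d j = b - 1 - d (K - Suc j)" .
    moreover have "d (K - Suc j) \<le> b - 1"
      unfolding d_def using \<open>0 < b\<close> by (rule digit_le)
    ultimately show ?thesis by (simp only: le_add_diff_inverse2)
  qed
  have "2 * (\<Sum>j<K. d j) = (\<Sum>j<K. d j) + (\<Sum>j<K. d (K - Suc j))"
    by (simp only: sum.nat_diff_reindex mult_2)
  also have "\<dots> = (\<Sum>j<K. b - 1)"
    by (simp add: sum.distrib[symmetric] pair)
  finally show ?thesis
    by (simp add: K_def d_def)
qed

theorem mainTheorem3:
  fixes b m :: nat
  assumes "b \<ge> 2"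
    and "antipalindromic b m"
    and "even (num_digits b m)"
  shows "(b - 1) dvd m"
proof -
  define K where "K = num_digits b m"
  obtain k where "K = 2 * k"
    using assms(3) unfolding K_def by blast
  have "2 * (\<Sum>j<K. digit b m j) = 2 * (k * (b - 1))"
    using antipalindromic_double_digit_sum[of b m] assms(1,2) \<open>K = 2 * k\<close>
    unfolding K_def by simp
  then have "(b - 1) dvd (\<Sum>j<K. digit b m j)"
    by simp
  moreover have "[m = (\<Sum>j<K. digit b m j)] (mod (b - 1))"
    using assms(1) less_power_num_digits[OF assms(1)] unfolding K_def
    by (intro cong_sum_digits) simp_all
  ultimately show ?thesis
    using cong_dvd_iff by blast
qed

end
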